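(* Let $\Phi$ be a dictionary with coherence $\mu$, let $m\ge1$ with $m<\tfrac12(\mu^{-1}+1)$, and let $y=\Phi x^*$ be an $m$-sparse signal with $\|x^*\|_0\le m$ and support $\Lambda_{opt}$. Let $\beta>0$ with $\|x^*\|_1\le\beta$. Then the iterates $x_k$ of the Frank-Wolfe algorithm for Problem (P$_\beta$) converge to $x^*$ as $k\to\infty$.
   Context: A dictionary is a matrix $\Phi=[\varphi_1,\dots,\varphi_n]\in\mathbb{R}^{d\times n}$ whose columns (atoms) satisfy $\|\varphi_i\|_2=1$. Its coherence is $\mu=\max_{j\neq k}|\langle\varphi_j,\varphi_k\rangle|$. A signal $y\in\mathbb{R}^d$ is $m$-sparse if $y=\Phi x^*$ for some $x^*\in\mathbb{R}^n$ with at most $m$ nonzero entries; when $m<\tfrac12(\mu^{-1}+1)$ such an $x^*$ is unique, and its support is denoted $\Lambda_{opt}$. Problem (P$_\beta$): minimize $f(x)=\tfrac12\|y-\Phi x\|_2^2$ over $B_1(\beta)=\{x\in\mathbb{R}^n:\|x\|_1\le\beta\}$. Frank-Wolfe algorithm for (P$_\beta$): set $x_0=0$. For $k=0,1,2,\dots$: let $r_k=y-\Phi x_k$; choose $i_k\in\arg\max_{i}|\langle\varphi_i,r_k\rangle|$ (any maximizer); set $s_k=\operatorname{sign}(\langle\varphi_{i_k},r_k\rangle)\,\beta\, e_{i_k}$ ($e_i$ the canonical basis vectors, $\operatorname{sign}(0)\in\{\pm1\}$ arbitrary); choose $\gamma_k\in\arg\min_{\gamma\in[0,1]}\|y-\Phi(x_k+\gamma(s_k-x_k))\|_2^2$;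 set $x_{k+1}=x_k+\gamma_k(s_k-x_k)$. *)

theory Defs
  imports "HOL-Analysis.Analysis"
begin

text \<open>A dictionary is a d x n real matrix (type real^'n^'d) whose columns are the atoms.\<close>

definition unit_columns :: "real^'n^'d \<Rightarrow> bool" where
  "unit_columns Phi \<longleftrightarrow> (\<forall>i. norm (column i Phi) = 1)"

text \<open>Coherence: maximum of absolute inner products of distinct atoms
  (convention: 0 when there is only one atom, i.e. no pair exists).\<close>
definition coherence :: "real^'n^'d \<Rightarrow> real" where
  "coherence Phi = Max ({\<bar>inner (column j Phi) (column k Phi)\<bar> | j k. j \<noteq> k} \<union> {0})"

definition l1norm :: "real^'n \<Rightarrow> real" where
  "l1norm x = (\<Sum>i\<in>UNIV. \<bar>x $ i\<bar>)"

definition supp :: "real^'n \<Rightarrow> 'n set" where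
  "supp x = {i. x $ i \<noteq> 0}"

definition fw_obj :: "real^'n^'d \<Rightarrow> real^'d \<Rightarrow> real^'n \<Rightarrow> real" where
  "fw_obj Phi y x = (1/2) * (norm (y - Phi *v x))\<^sup>2"

text \<open>One Frank-Wolfe step from xk to xk' (with any admissible choices of
  maximizing index, sign of zero, and exact line-search minimizer).\<close>
definition fw_step :: "real^'n^'d \<Rightarrow> real^'d \<Rightarrow> real \<Rightarrow> real^'n \<Rightarrow> real^'n \<Rightarrow> bool" where
  "fw_step Phi y beta xk xk' \<longleftrightarrow>
     (\<exists>i \<sigma> \<gamma> s.
        (let r = y - Phi *v xk in
          (\<forall>j. \<bar>inner (column j Phi) r\<bar> \<le> \<bar>inner (column i Phi) r\<bar>) \<and>
          \<sigma> \<in> {-1, 1} \<and>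
          (inner (column i Phi) r > 0 \<longrightarrow> \<sigma> = 1) \<and>
          (inner (column i Phi) r < 0 \<longrightarrow> \<sigma> = -1) \<and>
          s = (\<sigma> * beta) *\<^sub>R axis i 1 \<and>
          \<gamma> \<in> {0..1} \<and>
          (\<forall>g\<in>{0..1}. (norm (y - Phi *v (xk + \<gamma> *\<^sub>R (s - xk))))\<^sup>2
                        \<le> (norm (y - Phi *v (xk + g *\<^sub>R (s - xk))))\<^sup>2) \<and>
          xk' = xk + \<gamma> *\<^sub>R (s - xk)))"

definition fw_iterates :: "real^'n^'d \<Rightarrow> real^'d \<Rightarrow> real \<Rightarrow> (nat \<Rightarrow> real^'n) \<Rightarrow> bool" where
  "fw_iterates Phi y beta xs \<longleftrightarrow> xs 0 = 0 \<and> (\<forall>k. fw_step Phi y beta (xs k) (xs (Suc k)))"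

end

theory Submission
  imports Defs
begin

text \<open>Let \<open>L\<close> be the support of \<open>x\<^sup>*\<close>. As in Tropp's analysis of orthogonal matching pursuit,
  the coherence bound \<open>(2|L| - 1)\<mu> < 1\<close> forces the atom most correlated with a nonzero residual
  \<open>\<Phi>(x\<^sup>* - x)\<close>, \<open>x\<close> supported on \<open>L\<close>, to lie in \<open>L\<close>; a zero residual forces the step to land on
  \<open>x\<^sup>*\<close> itself. Hence all iterates are supported on \<open>L\<close>. Since \<open>x\<^sup>*\<close> lies in the \<open>\<ell>\<^sub>1\<close>-ball,
  the Frank-Wolfe gap dominates \<open>2f(x\<^sub>k)\<close>, so exact line search gives
  \<open>f(x\<^sub>k\<^sub>+\<^sub>1) \<le> (1 - 2\<gamma>) f(x\<^sub>k) + \<gamma>\<^sup>2 D\<close> for every \<open>\<gamma> \<in> [0,1]\<close>, with \<open>D\<close> depending only on \<open>\<beta>\<close>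
  and \<open>\<parallel>y\<parallel>\<close>; hence \<open>f(x\<^sub>k) \<rightarrow> 0\<close>. Finally, on vectors supported on \<open>L\<close> the Gershgorin bound
  \<open>|z\<^sub>j| (1 - (|L| - 1)\<mu>) \<le> \<parallel>\<Phi>z\<parallel>\<close> turns \<open>\<Phi>x\<^sub>k \<rightarrow> y\<close> into \<open>x\<^sub>k \<rightarrow> x\<^sup>*\<close>.\<close>

lemma finite_coherence_set:
  fixes Phi :: "real^'n^'d"
  shows "finite ({\<bar>inner (column j Phi) (column k Phi)\<bar> | j k. j \<noteq> k} \<union> {0})"
proof (rule finite_subset)
  show "{\<bar>inner (column j Phi) (column k Phi)\<bar> | j k. j \<noteq> k} \<union> {0}
      \<subseteq> (\<lambda>(j, k). \<bar>inner (column j Phi) (column k Phi)\<bar>) ` UNIV \<union> {0}"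
    by auto
qed simp

lemma coherence_nonneg: "0 \<le> coherence Phi"
  unfolding coherence_def by (rule Max_ge[OF finite_coherence_set]) simp

lemma abs_inner_column_le_coherence:
  "j \<noteq> k \<Longrightarrow> \<bar>inner (column j Phi) (column k Phi)\<bar> \<le> coherence Phi"
  unfolding coherence_def by (rule Max_ge[OF finite_coherence_set]) blast

lemma card_mult_coherence_lt:
  assumes "(2 * real n - 1) * coherence Phi < 1"
  shows "real n * coherence Phi < 1"
proof (cases "n = 0")
  case False
  then have "real n * coherence Phi \<le> (2 * real n - 1) * coherence Phi"
    using coherence_nonneg[of Phi] by (intro mult_right_mono) auto
  with assms show ?thesis by linarith
qed simp

lemma inner_column_self: "unit_columns Phi \<Longrightarrow> inner (column j Phi) (column j Phi) = 1"
  unfolding unit_columns_def by (metis power2_norm_eq_inner power_one)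

lemma supp_diff_subset: "supp (a - b) \<subseteq> supp a \<union> supp b"
  unfolding supp_def by auto

lemma exists_max_abs_component: "\<exists>j0. \<forall>j. \<bar>(z::real^'n) $ j\<bar> \<le> \<bar>z $ j0\<bar>"
proof -
  have "Max (range (\<lambda>j. \<bar>z $ j\<bar>)) \<in> range (\<lambda>j. \<bar>z $ j\<bar>)"
    by (rule Max_in) auto
  then obtain j0 where j0: "\<bar>z $ j0\<bar> = Max (range (\<lambda>j. \<bar>z $ j\<bar>))"
    by (metis imageE)
  have "\<forall>j. \<bar>z $ j\<bar> \<le> \<bar>z $ j0\<bar>"
    unfolding j0 by (auto intro: Max_ge)
  then show ?thesis by blast
qed

lemma inner_column_matrix_vector_mult:
  assumes "supp z \<subseteq> S"
  shows "inner (column i Phi) (Phi *v z) = (\<Sum>j\<in>S. z $ j * inner (column i Phi) (column j Phi))"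
proof -
  have "inner (column i Phi) (Phi *v z) = (\<Sum>j\<in>UNIV. z $ j * inner (column i Phi) (column j Phi))"
    by (simp add: matrix_mult_sum scalar_mult_eq_scaleR inner_sum_right)
  also have "\<dots> = (\<Sum>j\<in>S. z $ j * inner (column i Phi) (column j Phi))"
    using assms by (intro sum.mono_neutral_right) (auto simp: supp_def)
  finally show ?thesis .
qed

lemma abs_inner_column_max_component_ge:
  assumes u: "unit_columns Phi" and S: "supp z \<subseteq> S"
    and max: "\<forall>j. \<bar>z $ j\<bar> \<le> \<bar>z $ j0\<bar>" and j0: "j0 \<in> S"
  shows "\<bar>z $ j0\<bar> * (1 - (real (card S) - 1) * coherence Phi)
    \<le> \<bar>inner (column j0 Phi) (Phi *v z)\<bar>"
proof -
  let ?f = "\<lambda>j. z $ j * inner (column j0 Phi) (column j Phi)"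
  have "inner (column j0 Phi) (Phi *v z) = z $ j0 + sum ?f (S - {j0})"
    using inner_column_matrix_vector_mult[OF S, of j0 Phi] j0 inner_column_self[OF u]
    by (simp add: sum.remove)
  moreover have "\<bar>sum ?f (S - {j0})\<bar> \<le> (\<Sum>j\<in>S - {j0}. \<bar>z $ j0\<bar> * coherence Phi)"
  proof (rule order_trans[OF sum_abs sum_mono])
    fix j assume "j \<in> S - {j0}"
    then have "j0 \<noteq> j" by auto
    from abs_inner_column_le_coherence[OF this, of Phi] max
    show "\<bar>?f j\<bar> \<le> \<bar>z $ j0\<bar> * coherence Phi"
      by (simp add: abs_mult mult_mono)
  qed
  moreover have "real (card (S - {j0})) = real (card S) - 1"
  proof -
    have "1 \<le> card S"
      using j0 by (simp add: Suc_le_eq card_gt_0_iff) blast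
    with j0 show ?thesis by (simp add: of_nat_diff)
  qed
  ultimately show ?thesis by (simp add: algebra_simps)
qed

lemma abs_inner_column_off_support_le:
  assumes S: "supp z \<subseteq> S" and max: "\<forall>j. \<bar>z $ j\<bar> \<le> \<bar>z $ j0\<bar>" and i: "i \<notin> S"
  shows "\<bar>inner (column i Phi) (Phi *v z)\<bar> \<le> real (card S) * (\<bar>z $ j0\<bar> * coherence Phi)"
proof -
  have "\<bar>inner (column i Phi) (Phi *v z)\<bar>
      \<le> (\<Sum>j\<in>S. \<bar>z $ j * inner (column i Phi) (column j Phi)\<bar>)"
    unfolding inner_column_matrix_vector_mult[OF S] by (rule sum_abs)
  also have "\<dots> \<le> (\<Sum>j\<in>S. \<bar>z $ j0\<bar> * coherence Phi)"
  proof (rule sum_mono)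
    fix j assume "j \<in> S"
    then have "i \<noteq> j" using i by auto
    from abs_inner_column_le_coherence[OF this, of Phi] max
    show "\<bar>z $ j * inner (column i Phi) (column j Phi)\<bar> \<le> \<bar>z $ j0\<bar> * coherence Phi"
      by (simp add: abs_mult mult_mono)
  qed
  finally show ?thesis by simp
qed

lemma greedy_index_in_support:
  assumes u: "unit_columns Phi" and S: "supp z \<subseteq> S" and "z \<noteq> 0"
    and coh: "(2 * real (card S) - 1) * coherence Phi < 1"
    and greedy: "\<forall>j. \<bar>inner (column j Phi) (Phi *v z)\<bar> \<le> \<bar>inner (column i Phi) (Phi *v z)\<bar>"
  shows "i \<in> S"
proof (rule ccontr)
  assume i: "i \<notin> S"
  obtain j0 where max: "\<forall>j. \<bar>z $ j\<bar> \<le> \<bar>z $ j0\<bar>"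
    using exists_max_abs_component by blast
  have "z $ j0 \<noteq> 0"
    using \<open>z \<noteq> 0\<close> max by (auto simp: vec_eq_iff)
  then have j0: "j0 \<in> S"
    using S by (auto simp: supp_def)
  have "\<bar>z $ j0\<bar> * (1 - (real (card S) - 1) * coherence Phi)
      \<le> \<bar>inner (column j0 Phi) (Phi *v z)\<bar>"
    by (rule abs_inner_column_max_component_ge[OF u S max j0])
  also have "\<dots> \<le> \<bar>inner (column i Phi) (Phi *v z)\<bar>"
    using greedy by blast
  also have "\<dots> \<le> \<bar>z $ j0\<bar> * (real (card S) * coherence Phi)"
    using abs_inner_column_off_support_le[OF S max i] by (simp add: algebra_simps)
  finally have "1 - (real (card S) - 1) * coherence Phi \<le> real (card S) * coherence Phi"
    using \<open>z $ j0 \<noteq> 0\<close> by simp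
  with coh show False
    by (simp add: algebra_simps)
qed

lemma abs_component_le_norm_matrix_vector_mult:
  assumes u: "unit_columns Phi" and S: "supp z \<subseteq> S"
  shows "\<bar>z $ j\<bar> * (1 - (real (card S) - 1) * coherence Phi) \<le> norm (Phi *v z)"
proof -
  define c where "c = 1 - (real (card S) - 1) * coherence Phi"
  obtain j0 where max: "\<forall>j. \<bar>z $ j\<bar> \<le> \<bar>z $ j0\<bar>"
    using exists_max_abs_component by blast
  consider "c \<le> 0" | "z $ j0 = 0" | "0 < c" "z $ j0 \<noteq> 0"
    by linarith
  then show ?thesis
  proof cases
    case 1
    then show ?thesis
      unfolding c_def[symmetric] by (meson abs_ge_zero mult_nonneg_nonpos norm_ge_zero order_trans)
  next
    case 2
    then have "z $ j = 0"
      using max[rule_format, of j] by simp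
    then show ?thesis by simp
  next
    case 3
    then have j0: "j0 \<in> S"
      using S by (auto simp: supp_def)
    have "\<bar>z $ j\<bar> * c \<le> \<bar>z $ j0\<bar> * c"
      using max \<open>0 < c\<close> by (simp add: mult_right_mono)
    also have "\<dots> \<le> \<bar>inner (column j0 Phi) (Phi *v z)\<bar>"
      unfolding c_def by (rule abs_inner_column_max_component_ge[OF u S max j0])
    also have "\<dots> \<le> norm (column j0 Phi) * norm (Phi *v z)"
      by (rule Cauchy_Schwarz_ineq2)
    finally show ?thesis
      using u unfolding c_def unit_columns_def by simp
  qed
qed

lemma norm_le_norm_matrix_vector_mult:
  fixes z :: "real^'n"
  assumes u: "unit_columns Phi" and S: "supp z \<subseteq> S"
    and coh: "(real (card S) - 1) * coherence Phi < 1"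
  shows "norm z \<le> real CARD('n) / (1 - (real (card S) - 1) * coherence Phi) * norm (Phi *v z)"
proof -
  define c where "c = 1 - (real (card S) - 1) * coherence Phi"
  have "0 < c"
    using coh by (simp add: c_def)
  have "norm z \<le> (\<Sum>j\<in>UNIV. \<bar>z $ j\<bar>)"
    by (rule norm_le_l1_cart)
  also have "\<dots> \<le> (\<Sum>j\<in>(UNIV::'n set). norm (Phi *v z) / c)"
    using abs_component_le_norm_matrix_vector_mult[OF u S] \<open>0 < c\<close>
    by (intro sum_mono) (simp add: c_def pos_le_divide_eq)
  finally show ?thesis
    by (simp add: c_def)
qed

lemma fw_stepE:
  assumes "fw_step Phi y beta x x'"
  obtains i \<sigma> \<gamma> s where
    "\<forall>j. \<bar>inner (column j Phi) (y - Phi *v x)\<bar> \<le> \<bar>inner (column i Phi) (y - Phi *v x)\<bar>"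
    "\<sigma> \<in> {-1, 1}"
    "\<sigma> * inner (column i Phi) (y - Phi *v x) = \<bar>inner (column i Phi) (y - Phi *v x)\<bar>"
    "s = (\<sigma> * beta) *\<^sub>R axis i 1"
    "\<gamma> \<in> {0..1}"
    "\<forall>g\<in>{0..1}. (norm (y - Phi *v (x + \<gamma> *\<^sub>R (s - x))))\<^sup>2
                  \<le> (norm (y - Phi *v (x + g *\<^sub>R (s - x))))\<^sup>2"
    "x' = x + \<gamma> *\<^sub>R (s - x)"
proof -
  from assms obtain i \<sigma> \<gamma> s where
    "\<forall>j. \<bar>inner (column j Phi) (y - Phi *v x)\<bar> \<le> \<bar>inner (column i Phi) (y - Phi *v x)\<bar>"
    and \<sigma>: "\<sigma> \<in> {-1, 1}"
    and "inner (column i Phi) (y - Phi *v x) > 0 \<longrightarrow> \<sigma> = 1"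
    and "inner (column i Phi) (y - Phi *v x) < 0 \<longrightarrow> \<sigma> = -1"
    and "s = (\<sigma> * beta) *\<^sub>R axis i 1" and "\<gamma> \<in> {0..1}"
    and "\<forall>g\<in>{0..1}. (norm (y - Phi *v (x + \<gamma> *\<^sub>R (s - x))))\<^sup>2
                  \<le> (norm (y - Phi *v (x + g *\<^sub>R (s - x))))\<^sup>2"
    and "x' = x + \<gamma> *\<^sub>R (s - x)"
    unfolding fw_step_def Let_def by blast
  moreover have "\<sigma> * inner (column i Phi) (y - Phi *v x) = \<bar>inner (column i Phi) (y - Phi *v x)\<bar>"
    using calculation by (cases "inner (column i Phi) (y - Phi *v x)" "0::real" rule: linorder_cases) auto
  ultimately show ?thesis
    using that by blast
qed

lemma fw_step_residual_le:
  assumes "fw_step Phi y beta x x'"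
  shows "norm (y - Phi *v x') \<le> norm (y - Phi *v x)"
proof -
  obtain \<gamma> s where
    ls: "\<forall>g\<in>{0..1}. (norm (y - Phi *v (x + \<gamma> *\<^sub>R (s - x))))\<^sup>2
                     \<le> (norm (y - Phi *v (x + g *\<^sub>R (s - x))))\<^sup>2"
    and x': "x' = x + \<gamma> *\<^sub>R (s - x)"
    by (rule fw_stepE[OF assms]) blast
  from ls[rule_format, of 0] have "(norm (y - Phi *v x'))\<^sup>2 \<le> (norm (y - Phi *v x))\<^sup>2"
    unfolding x' by simp
  then show ?thesis
    by (rule power2_le_imp_le) simp
qed

lemma fw_step_supp_subset:
  fixes Phi :: "real^'n^'d"
  assumes u: "unit_columns Phi"
    and coh: "(2 * real (card L) - 1) * coherence Phi < 1"
    and y: "y = Phi *v xstar" and "supp xstar \<subseteq> L" and "supp x \<subseteq> L"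
    and step: "fw_step Phi y beta x x'"
  shows "supp x' \<subseteq> L"
proof -
  obtain i \<sigma> \<gamma> s where
    greedy: "\<forall>j. \<bar>inner (column j Phi) (y - Phi *v x)\<bar> \<le> \<bar>inner (column i Phi) (y - Phi *v x)\<bar>"
    and s: "s = (\<sigma> * beta) *\<^sub>R axis i 1" and x': "x' = x + \<gamma> *\<^sub>R (s - x)"
    by (rule fw_stepE[OF step]) blast
  have x'_insert: "supp x' \<subseteq> insert i L"
    using \<open>supp x \<subseteq> L\<close> unfolding x' s supp_def by (auto simp: axis_def)
  have residual: "y - Phi *v x = Phi *v (xstar - x)"
    unfolding y by (simp add: matrix_vector_mult_diff_distrib)
  have diff_supp: "supp (xstar - x) \<subseteq> L"
    using supp_diff_subset \<open>supp xstar \<subseteq> L\<close> \<open>supp x \<subseteq> L\<close> by blast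
  show ?thesis
  proof (cases "xstar = x")
    case False
    then have "i \<in> L"
      using greedy_index_in_support[OF u diff_supp _ coh] greedy residual by simp
    with x'_insert show ?thesis by auto
  next
    case True
    \<comment> \<open>The step cannot increase the zero residual, so it stays at a sparse solution of
      \<open>\<Phi>x = y\<close>, which is unique.\<close>
    then have Phi_diff: "Phi *v (xstar - x') = 0"
      using fw_step_residual_le[OF step] by (simp add: y matrix_vector_mult_diff_distrib)
    have supp_insert: "supp (xstar - x') \<subseteq> insert i L"
      using supp_diff_subset \<open>supp xstar \<subseteq> L\<close> x'_insert by blast
    have "(real (card (insert i L)) - 1) * coherence Phi < 1"
    proof -
      have "real (card (insert i L)) - 1 \<le> real (card L)"
        by (simp add: card_insert_if)
      then have "(real (card (insert i L)) - 1) * coherence Phi \<le> real (card L) * coherence Phi"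
        using coherence_nonneg by (rule mult_right_mono)
      with card_mult_coherence_lt[OF coh] show ?thesis by linarith
    qed
    from norm_le_norm_matrix_vector_mult[OF u supp_insert this] Phi_diff
    have "xstar = x'"
      by simp
    then show ?thesis
      using \<open>supp xstar \<subseteq> L\<close> by simp
  qed
qed

lemma norm_diff_scaleR_squared:
  fixes r w :: "'a::real_inner"
  shows "(norm (r - g *\<^sub>R w))\<^sup>2 = (norm r)\<^sup>2 - 2 * g * inner r w + g\<^sup>2 * (norm w)\<^sup>2"
  unfolding power2_norm_eq_inner
  by (simp add: inner_diff_left inner_diff_right inner_commute algebra_simps power2_eq_square)

lemma fw_step_descent:
  fixes Phi :: "real^'n^'d"
  assumes u: "unit_columns Phi"
    and y: "y = Phi *v xstar" and l1: "l1norm xstar \<le> beta" and "beta > 0"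
    and step: "fw_step Phi y beta x x'"
    and residual_le: "norm (y - Phi *v x) \<le> norm y"
    and g: "g \<in> {0..1}"
  shows "(norm (y - Phi *v x'))\<^sup>2
    \<le> (norm (y - Phi *v x))\<^sup>2 - 2 * g * (norm (y - Phi *v x))\<^sup>2 + g\<^sup>2 * (beta + 2 * norm y)\<^sup>2"
proof -
  obtain i \<sigma> \<gamma> s where
    greedy: "\<forall>j. \<bar>inner (column j Phi) (y - Phi *v x)\<bar> \<le> \<bar>inner (column i Phi) (y - Phi *v x)\<bar>"
    and \<sigma>: "\<sigma> \<in> {-1, 1}"
    and sign: "\<sigma> * inner (column i Phi) (y - Phi *v x) = \<bar>inner (column i Phi) (y - Phi *v x)\<bar>"
    and s: "s = (\<sigma> * beta) *\<^sub>R axis i 1"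
    and ls: "\<forall>g\<in>{0..1}. (norm (y - Phi *v (x + \<gamma> *\<^sub>R (s - x))))\<^sup>2
                     \<le> (norm (y - Phi *v (x + g *\<^sub>R (s - x))))\<^sup>2"
    and x': "x' = x + \<gamma> *\<^sub>R (s - x)"
    by (rule fw_stepE[OF step])
  define r where "r = y - Phi *v x"
  define w where "w = Phi *v (s - x)"
  define c where "c = \<bar>inner (column i Phi) r\<bar>"
  have Phi_s: "Phi *v s = (\<sigma> * beta) *\<^sub>R column i Phi"
    unfolding s by (simp add: matrix_vector_mult_scaleR matrix_vector_mult_basis)
  have "inner r y = (\<Sum>j\<in>UNIV. xstar $ j * inner (column j Phi) r)"
    unfolding y by (simp add: matrix_mult_sum scalar_mult_eq_scaleR inner_sum_right inner_commute)
  also have "\<dots> \<le> (\<Sum>j\<in>UNIV. \<bar>xstar $ j\<bar> * c)"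
  proof (rule sum_mono)
    fix j
    have "xstar $ j * inner (column j Phi) r \<le> \<bar>xstar $ j\<bar> * \<bar>inner (column j Phi) r\<bar>"
      by (metis abs_ge_self abs_mult)
    also have "\<dots> \<le> \<bar>xstar $ j\<bar> * c"
      using greedy by (simp add: c_def r_def mult_left_mono)
    finally show "xstar $ j * inner (column j Phi) r \<le> \<bar>xstar $ j\<bar> * c" .
  qed
  also have "\<dots> \<le> beta * c"
    using l1 by (simp add: l1norm_def c_def sum_distrib_right[symmetric] mult_right_mono)
  finally have "inner r y \<le> beta * c" .
  \<comment> \<open>Frank-Wolfe gap: \<open>x\<^sup>*\<close> is feasible, so \<open>\<langle>r, \<Phi>s\<rangle> = \<beta>c \<ge> \<langle>r, y\<rangle>\<close>.\<close>
  moreover have "inner r w = beta * c - inner r y + inner r r"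
  proof -
    have "\<sigma> * inner (column i Phi) r = c"
      using sign unfolding r_def c_def .
    then have "inner r (Phi *v s) = beta * c"
      unfolding Phi_s by (simp add: inner_commute algebra_simps)
    moreover have "Phi *v x = y - r"
      unfolding r_def by simp
    ultimately show ?thesis
      by (simp add: w_def matrix_vector_mult_diff_distrib inner_diff_right)
  qed
  ultimately have gap: "(norm r)\<^sup>2 \<le> inner r w"
    by (simp add: power2_norm_eq_inner)
  have "norm (Phi *v s) = beta"
    using \<sigma> \<open>beta > 0\<close> u unfolding Phi_s unit_columns_def by auto
  moreover have "norm (Phi *v x) \<le> norm y + norm r"
    using norm_triangle_ineq4[of y r] by (simp add: r_def)
  ultimately have "norm w \<le> beta + 2 * norm y"
    using norm_triangle_ineq4[of "Phi *v s" "Phi *v x"] residual_le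
    by (simp add: w_def r_def matrix_vector_mult_diff_distrib)
  then have w_bound: "(norm w)\<^sup>2 \<le> (beta + 2 * norm y)\<^sup>2"
    by (simp add: power_mono)
  have "y - Phi *v (x + g *\<^sub>R (s - x)) = r - g *\<^sub>R w"
    unfolding r_def w_def by (simp add: matrix_vector_right_distrib matrix_vector_mult_scaleR)
  then have "(norm (y - Phi *v x'))\<^sup>2 \<le> (norm (r - g *\<^sub>R w))\<^sup>2"
    using ls[rule_format, OF g] unfolding x' by simp
  also have "\<dots> = (norm r)\<^sup>2 - 2 * g * inner r w + g\<^sup>2 * (norm w)\<^sup>2"
    by (rule norm_diff_scaleR_squared)
  also have "\<dots> \<le> (norm r)\<^sup>2 - 2 * g * (norm r)\<^sup>2 + g\<^sup>2 * (beta + 2 * norm y)\<^sup>2"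
  proof -
    have "2 * g * (norm r)\<^sup>2 \<le> 2 * g * inner r w"
      using gap g by (simp add: mult_left_mono)
    moreover have "g\<^sup>2 * (norm w)\<^sup>2 \<le> g\<^sup>2 * (beta + 2 * norm y)\<^sup>2"
      using w_bound by (simp add: mult_left_mono)
    ultimately show ?thesis by linarith
  qed
  finally show ?thesis
    unfolding r_def .
qed

lemma tendsto_zero_of_descent:
  fixes E :: "nat \<Rightarrow> real"
  assumes nonneg: "\<And>k. 0 \<le> E k"
    and descent: "\<And>g k. g \<in> {0..1} \<Longrightarrow> E (Suc k) \<le> E k - 2 * g * E k + g\<^sup>2 * D"
  shows "E \<longlonglongrightarrow> 0"
proof -
  have "decseq E"
    using descent[of 0] by (simp add: decseq_Suc_iff)
  then obtain l where lim: "E \<longlonglongrightarrow> l"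
    using decseq_convergent nonneg by blast
  have "0 \<le> l"
    using lim nonneg by (simp add: LIMSEQ_le_const)
  have limit_descent: "2 * l \<le> g * D" if "0 < g" "g \<le> 1" for g
  proof -
    have "(\<lambda>k. E (Suc k) - (1 - 2 * g) * E k) \<longlonglongrightarrow> l - (1 - 2 * g) * l"
      by (intro tendsto_intros LIMSEQ_Suc lim)
    moreover have "E (Suc k) - (1 - 2 * g) * E k \<le> g\<^sup>2 * D" for k
      using descent[of g k] that by (simp add: algebra_simps)
    ultimately have "g * (2 * l) \<le> g * (g * D)"
      by (intro LIMSEQ_le_const2) (auto simp: algebra_simps power2_eq_square)
    with \<open>0 < g\<close> show ?thesis by simp
  qed
  have "l = 0"
  proof (rule ccontr)
    assume "l \<noteq> 0"
    define g where "g = min 1 (l / (\<bar>D\<bar> + 1))"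
    have "0 < g" "g \<le> 1"
      using \<open>0 \<le> l\<close> \<open>l \<noteq> 0\<close> by (simp_all add: g_def)
    have "g * D \<le> l / (\<bar>D\<bar> + 1) * \<bar>D\<bar>"
      using \<open>0 < g\<close> by (intro order_trans[OF mult_left_mono[OF abs_ge_self] mult_right_mono])
        (auto simp: g_def)
    also have "\<dots> \<le> l"
      using \<open>0 \<le> l\<close> by (simp add: field_simps)
    also have "\<dots> < 2 * l"
      using \<open>0 \<le> l\<close> \<open>l \<noteq> 0\<close> by simp
    finally show False
      using limit_descent[OF \<open>0 < g\<close> \<open>g \<le> 1\<close>] by simp
  qed
  with lim show ?thesis by simp
qed

lemma fw_iterates_supp_subset:
  fixes Phi :: "real^'n^'d"
  assumes u: "unit_columns Phi"
    and coh: "(2 * real (card L) - 1) * coherence Phi < 1"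
    and y: "y = Phi *v xstar" and xstar: "supp xstar \<subseteq> L"
    and iter: "fw_iterates Phi y beta xs"
  shows "supp (xs k) \<subseteq> L"
proof (induction k)
  case 0
  from iter show ?case
    by (simp add: fw_iterates_def supp_def)
next
  case (Suc k)
  from iter have "fw_step Phi y beta (xs k) (xs (Suc k))"
    by (simp add: fw_iterates_def)
  with fw_step_supp_subset[OF u coh y xstar Suc] show ?case .
qed

lemma fw_iterates_tendsto:
  fixes Phi :: "real^'n^'d"
  assumes u: "unit_columns Phi"
    and y: "y = Phi *v xstar" and l1: "l1norm xstar \<le> beta" and "beta > 0"
    and iter: "fw_iterates Phi y beta xs"
  shows "(\<lambda>k. Phi *v xs k) \<longlonglongrightarrow> y"
proof -
  have x0: "xs 0 = 0" and step: "\<And>k. fw_step Phi y beta (xs k) (xs (Suc k))"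
    using iter by (auto simp: fw_iterates_def)
  have residual_le: "norm (y - Phi *v xs k) \<le> norm y" for k
    by (induction k) (use fw_step_residual_le[OF step] x0 in \<open>auto intro: order_trans\<close>)
  define E where "E k = (norm (y - Phi *v xs k))\<^sup>2" for k
  have "E \<longlonglongrightarrow> 0"
  proof (rule tendsto_zero_of_descent)
    show "0 \<le> E k" for k
      by (simp add: E_def)
    show "E (Suc k) \<le> E k - 2 * g * E k + g\<^sup>2 * (beta + 2 * norm y)\<^sup>2" if "g \<in> {0..1}" for g k
      unfolding E_def by (rule fw_step_descent[OF u y l1 \<open>beta > 0\<close> step residual_le that])
  qed
  from tendsto_real_sqrt[OF this] have "(\<lambda>k. norm (y - Phi *v xs k)) \<longlonglongrightarrow> 0"
    by (simp add: E_def)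
  from tendsto_diff[OF tendsto_const[of y] this[unfolded tendsto_norm_zero_iff]] show ?thesis
    by simp
qed

lemma sparse_tendsto_of_matrix_vector_mult_tendsto:
  fixes Phi :: "real^'n^'d"
  assumes u: "unit_columns Phi"
    and coh: "(real (card L) - 1) * coherence Phi < 1"
    and supp_xs: "\<And>k. supp (xs k) \<subseteq> L" and "supp x \<subseteq> L"
    and lim: "(\<lambda>k. Phi *v xs k) \<longlonglongrightarrow> Phi *v x"
  shows "xs \<longlonglongrightarrow> x"
proof -
  define C where "C = real CARD('n) / (1 - (real (card L) - 1) * coherence Phi)"
  have bound: "\<forall>k. norm (xs k - x) \<le> C * norm (Phi *v xs k - Phi *v x)"
  proof
    fix k
    have "supp (xs k - x) \<subseteq> L"
      using supp_diff_subset supp_xs \<open>supp x \<subseteq> L\<close> by blast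
    from norm_le_norm_matrix_vector_mult[OF u this coh]
    show "norm (xs k - x) \<le> C * norm (Phi *v xs k - Phi *v x)"
      by (simp add: C_def matrix_vector_mult_diff_distrib)
  qed
  from lim have "(\<lambda>k. norm (Phi *v xs k - Phi *v x)) \<longlonglongrightarrow> 0"
    by (simp add: Lim_null[of "\<lambda>k. Phi *v xs k"] tendsto_norm_zero_iff)
  from tendsto_mult[OF tendsto_const this, of C]
  have "(\<lambda>k. C * norm (Phi *v xs k - Phi *v x)) \<longlonglongrightarrow> 0"
    by simp
  with Lim_null_comparison[OF always_eventually[OF bound]]
  have "(\<lambda>k. xs k - x) \<longlonglongrightarrow> 0" .
  then show ?thesis
    by (rule Lim_null[THEN iffD2])
qed

theorem corollary1:
  fixes Phi :: "real^'n^'d" and xstar :: "real^'n" and y :: "real^'d"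
    and m :: nat and beta :: real and xs :: "nat \<Rightarrow> real^'n"
  assumes "unit_columns Phi"
    and "m \<ge> 1"
    and "(2 * real m - 1) * coherence Phi < 1"
    and "y = Phi *v xstar"
    and "card (supp xstar) \<le> m"
    and "beta > 0"
    and "l1norm xstar \<le> beta"
    and "fw_iterates Phi y beta xs"
  shows "xs \<longlonglongrightarrow> xstar"
proof -
  define L where "L = supp xstar"
  have "(2 * real (card L) - 1) * coherence Phi \<le> (2 * real m - 1) * coherence Phi"
    using assms(5) coherence_nonneg by (intro mult_right_mono) (auto simp: L_def)
  with assms(3) have coh: "(2 * real (card L) - 1) * coherence Phi < 1"
    by linarith
  then have coh': "(real (card L) - 1) * coherence Phi < 1"
    using card_mult_coherence_lt coherence_nonneg[of Phi] by (simp add: algebra_simps)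
  have "\<And>k. supp (xs k) \<subseteq> L"
    using fw_iterates_supp_subset[OF assms(1) coh assms(4) _ assms(8)] by (simp add: L_def)
  moreover have "(\<lambda>k. Phi *v xs k) \<longlonglongrightarrow> Phi *v xstar"
    using fw_iterates_tendsto[OF assms(1,4,7,6,8)] assms(4) by simp
  ultimately show ?thesis
    using sparse_tendsto_of_matrix_vector_mult_tendsto[OF assms(1) coh'] by (simp add: L_def)
qed

end
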